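(* There are at least $3n/4$ good indices $s\in[n]$.
   Context: Consider clustering with noisy queries with $k=2$ clusters. Let $\mathcal{D}$ be the distribution of instances on $n$ vertices $v_1,\dots,v_n$ in which each vertex is independently assigned to one of two clusters $C_0,C_1$ with probability $1/2$ each (let $c(i)$ denote the cluster of $v_i$); then, with the clusters fixed, each pair of vertices in the same cluster gets an edge (the oracle answers $+1$) with probability $\frac{1}{2}+\frac{\delta}{2}$ and each pair in different clusters gets an edge with probability $\frac{1}{2}-\frac{\delta}{2}$, independently across pairs. Let $\mathcal{A}$ be any (randomized) algorithm for clustering with noisy queries that correctly recovers all clusters with probability at least $7/8$ on an instance sampled from $\mathcal{D}$, i.e. $\Pr[\mathcal{E}]\ge 7/8$ where $\mathcal{E}$ is the event that $\mathcal{A}$ recovers all clusters correctly. For $i\in[n]$, let $\mathcal{E}_i$ be the event that $\mathcal{A}$ outputs the correct cluster label for $v_i$, i.e. $\tilde{c}(i)=c(i)$. All probabilities are over both $\mathcal{D}$ and the randomness of $\mathcal{A}$. An index $s\in[n]$ is called good if $\Pr[\mathcal{E}_s\mid\mathcal{E}_1,\dots,\mathcal{E}_{s-1}]\ge 1-1/n$. *)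

theory Defs
  imports "HOL-Probability.Probability"
begin

text \<open>A cluster assignment is c :: nat => bool (False = C_0, True = C_1),
  defined on {1..n} (default False elsewhere). The oracle answers are a graph
  G :: nat * nat => bool, G (i,j) for 1 <= i < j <= n meaning an edge (+1).\<close>

definition cluster_pmf :: "nat \<Rightarrow> (nat \<Rightarrow> bool) pmf" where
  "cluster_pmf n = Pi_pmf {1..n} False (\<lambda>_. bernoulli_pmf (1/2))"

definition edge_pmf :: "nat \<Rightarrow> real \<Rightarrow> (nat \<Rightarrow> bool) \<Rightarrow> (nat \<times> nat \<Rightarrow> bool) pmf" where
  "edge_pmf n \<delta> c = Pi_pmf {(i,j). 1 \<le> i \<and> i < j \<and> j \<le> n} False
     (\<lambda>(i,j). bernoulli_pmf (if c i = c j then 1/2 + \<delta>/2 else 1/2 - \<delta>/2))"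

definition instance_pmf :: "nat \<Rightarrow> real \<Rightarrow> ((nat \<Rightarrow> bool) \<times> (nat \<times> nat \<Rightarrow> bool)) pmf" where
  "instance_pmf n \<delta> = do { c \<leftarrow> cluster_pmf n; G \<leftarrow> edge_pmf n \<delta> c; return_pmf (c, G) }"

text \<open>A randomized algorithm only has access to the oracle answers G and outputs a
  label for each vertex; it is modelled as a Markov kernel A :: graph => labelling pmf.\<close>
definition run_pmf :: "nat \<Rightarrow> real \<Rightarrow> ((nat \<times> nat \<Rightarrow> bool) \<Rightarrow> (nat \<Rightarrow> bool) pmf)
    \<Rightarrow> ((nat \<Rightarrow> bool) \<times> (nat \<Rightarrow> bool)) pmf" where
  "run_pmf n \<delta> A = do { (c, G) \<leftarrow> instance_pmf n \<delta>; l \<leftarrow> A G; return_pmf (c, l) }"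

definition correct_upto :: "nat \<Rightarrow> ((nat \<Rightarrow> bool) \<times> (nat \<Rightarrow> bool)) set" where
  "correct_upto k = {(c, l). \<forall>i\<in>{1..k}. l i = c i}"

definition good_index :: "nat \<Rightarrow> real \<Rightarrow> ((nat \<times> nat \<Rightarrow> bool) \<Rightarrow> (nat \<Rightarrow> bool) pmf) \<Rightarrow> nat \<Rightarrow> bool" where
  "good_index n \<delta> A s \<longleftrightarrow>
     measure_pmf.prob (run_pmf n \<delta> A) (correct_upto s) /
     measure_pmf.prob (run_pmf n \<delta> A) (correct_upto (s - 1)) \<ge> 1 - 1 / real n"

end

theory Submission
  imports Defs
begin

text \<open>Write \<open>p k\<close> for the probability that the first \<open>k\<close> labels are correct. Then
  \<open>p 0 = 1\<close>, \<open>p\<close> is decreasing, and \<open>p n\<close> is the product of the ratios \<open>p s / p (s - 1)\<close>,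
  all of which lie in \<open>[0, 1]\<close>. Each bad index contributes a factor below \<open>1 - 1/n\<close>,
  so with \<open>b\<close> bad indices \<open>p n \<le> (1 - 1/n)\<^sup>b \<le> exp (- b/n)\<close>, i.e. \<open>b \<le> n ln (1 / p n)\<close>.
  Since \<open>p n \<ge> 7/8\<close> and \<open>ln (8/7) \<le> 1/7\<close>, at most \<open>n/7\<close> indices are bad.
  Nothing about the instance distribution is used.\<close>

lemma prod_le_power_card_subset:
  fixes f :: "'a \<Rightarrow> real"
  assumes "finite I" and "B \<subseteq> I"
    and "\<And>i. i \<in> I \<Longrightarrow> 0 \<le> f i \<and> f i \<le> 1"
    and "\<And>i. i \<in> B \<Longrightarrow> f i \<le> q"
  shows "prod f I \<le> q ^ card B"
proof -
  have "prod f I = prod f B * prod f (I - B)"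
    using assms(1,2) by (simp add: prod.subset_diff mult.commute)
  also have "\<dots> \<le> prod f B"
    using assms(2,3) by (intro mult_left_le prod_le_1 prod_nonneg) auto
  also have "\<dots> \<le> (\<Prod>i\<in>B. q)"
    using assms(2-4) by (intro prod_mono) auto
  finally show ?thesis by simp
qed

lemma one_plus_power_le_exp:
  fixes x :: real
  assumes "-1 \<le> x"
  shows "(1 + x) ^ k \<le> exp (real k * x)"
proof -
  have "(1 + x) ^ k \<le> exp x ^ k"
    using assms by (intro power_mono) auto
  then show ?thesis by (simp add: exp_of_nat_mult)
qed

lemma card_large_drops_le:
  fixes p :: "nat \<Rightarrow> real"
  assumes antimono: "\<And>k m. k \<le> m \<Longrightarrow> m \<le> n \<Longrightarrow> p m \<le> p k"
    and "p 0 = 1" and "p n > 0"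
  shows "real (card {s \<in> {1..n}. p s / p (s - 1) < 1 - 1 / real n}) \<le> - real n * ln (p n)"
proof (cases "n = 0")
  case False
  define B where "B = {s \<in> {1..n}. p s / p (s - 1) < 1 - 1 / real n}"
  have pos: "p k > 0" if "k \<le> n" for k
    using antimono[OF that] \<open>p n > 0\<close> by linarith
  have ratio_unit: "0 \<le> p s / p (s - 1) \<and> p s / p (s - 1) \<le> 1" if "s \<in> {1..n}" for s
    using that pos[of s] pos[of "s - 1"] antimono[of "s - 1" s] by auto
  have "p n = (\<Prod>s\<in>{1..n}. p s / p (s - 1))"
    using prod_telescope''[of 0 n p] pos \<open>p 0 = 1\<close> by (simp add: dual_order.strict_implies_not_eq)
  also have "\<dots> \<le> (1 - 1 / real n) ^ card B"
    using ratio_unit by (intro prod_le_power_card_subset) (auto simp: B_def)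
  also have "\<dots> \<le> exp (- real (card B) / real n)"
    using one_plus_power_le_exp[of "- 1 / real n" "card B"] False by simp
  finally have "ln (p n) \<le> - real (card B) / real n"
    using \<open>p n > 0\<close> by (metis ln_exp ln_mono)
  then show ?thesis
    using False by (simp add: B_def field_simps)
qed simp

lemma correct_upto_antimono: "k \<le> m \<Longrightarrow> correct_upto m \<subseteq> correct_upto k"
  unfolding correct_upto_def by auto

lemma correct_upto_0 [simp]: "correct_upto 0 = UNIV"
  unfolding correct_upto_def by auto

theorem lemma5p3:
  fixes n :: nat and \<delta> :: real and A :: "(nat \<times> nat \<Rightarrow> bool) \<Rightarrow> (nat \<Rightarrow> bool) pmf"
  assumes "0 \<le> \<delta>" and "\<delta> \<le> 1"
  assumes "measure_pmf.prob (run_pmf n \<delta> A) (correct_upto n) \<ge> 7/8"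
  shows "real (card {s \<in> {1..n}. good_index n \<delta> A s}) \<ge> 3 * real n / 4"
proof -
  define p where "p k = measure_pmf.prob (run_pmf n \<delta> A) (correct_upto k)" for k
  define bad where "bad = {s \<in> {1..n}. p s / p (s - 1) < 1 - 1 / real n}"
  have "p n \<ge> 7/8"
    using assms(3) by (simp add: p_def)
  have "real (card bad) \<le> real n * ln (1 / p n)"
    using card_large_drops_le[of n p] \<open>p n \<ge> 7/8\<close> correct_upto_antimono
    by (simp add: bad_def p_def ln_div measure_pmf.finite_measure_mono)
  also have "\<dots> \<le> real n * (1 / 7)"
  proof (intro mult_left_mono)
    have "ln (1 / p n) \<le> 1 / p n - 1"
      using \<open>p n \<ge> 7/8\<close> by (intro ln_le_minus_one) simp
    also have "\<dots> \<le> 8/7 - 1"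
      using \<open>p n \<ge> 7/8\<close> by (simp add: field_simps)
    finally show "ln (1 / p n) \<le> 1 / 7" by simp
  qed simp
  finally have "real (card bad) \<le> real n / 4"
    by simp
  moreover have "{s \<in> {1..n}. good_index n \<delta> A s} = {1..n} - bad"
    by (auto simp: good_index_def bad_def p_def)
  moreover have "bad \<subseteq> {1..n}"
    by (auto simp: bad_def)
  ultimately show ?thesis
    by (simp add: card_Diff_subset finite_subset of_nat_diff card_mono)
qed

end
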